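(* Let $A$ be an algebra, $R$ a Rota–Baxter operator of weight zero on $A$, and $e$ a nonzero idempotent of $A$. Then $e\notin \mathrm{Im}(R^k)\cap\ker R$ for every $k\ge2$.
   Context: An algebra is a vector space with a bilinear (not necessarily associative) product. A linear operator $R$ on $A$ is a Rota–Baxter operator of weight $0$ if $R(x)R(y)=R(R(x)y+xR(y))$ for all $x,y\in A$. *)

theory Defs
  imports Main "HOL.Vector_Spaces"
begin

definition bilinear_prod :: "('k::field \<Rightarrow> 'a::ab_group_add \<Rightarrow> 'a) \<Rightarrow> ('a \<Rightarrow> 'a \<Rightarrow> 'a) \<Rightarrow> bool" where
  "bilinear_prod scale mult \<longleftrightarrow>
     (\<forall>y. Vector_Spaces.linear scale scale (\<lambda>x. mult x y)) \<and>
     (\<forall>x. Vector_Spaces.linear scale scale (\<lambda>y. mult x y))"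

definition is_algebra :: "('k::field \<Rightarrow> 'a::ab_group_add \<Rightarrow> 'a) \<Rightarrow> ('a \<Rightarrow> 'a \<Rightarrow> 'a) \<Rightarrow> bool" where
  "is_algebra scale mult \<longleftrightarrow> vector_space scale \<and> bilinear_prod scale mult"

definition rota_baxter0 :: "('k::field \<Rightarrow> 'a::ab_group_add \<Rightarrow> 'a) \<Rightarrow> ('a \<Rightarrow> 'a \<Rightarrow> 'a) \<Rightarrow> ('a \<Rightarrow> 'a) \<Rightarrow> bool" where
  "rota_baxter0 scale mult R \<longleftrightarrow>
     Vector_Spaces.linear scale scale R \<and>
     (\<forall>x y. mult (R x) (R y) = R (mult (R x) y + mult x (R y)))"

end

theory Submission
  imports Defs
begin

text \<open>If \<open>R e = 0\<close>, the Rota--Baxter identity applied to the pairs \<open>(e, x)\<close> and \<open>(x, e)\<close>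
  shows that \<open>R\<close> kills \<open>e R(x)\<close> and \<open>R(x) e\<close>. Writing \<open>e = R(u)\<close> with \<open>u = R(w)\<close>,
  idempotency and the identity give \<open>e = R(u) R(u) = R(e R(w)) + R(R(w) e) = 0\<close>.\<close>

lemma linear_map_zero:
  assumes "Vector_Spaces.linear s1 s2 f"
  shows "f 0 = 0"
proof -
  have "f (0 + 0) = f 0 + f 0"
    using assms by (simp only: linear_iff)
  then show ?thesis by simp
qed

lemma bilinear_prod_zero_left: "bilinear_prod scale mult \<Longrightarrow> mult 0 y = 0"
  unfolding bilinear_prod_def using linear_map_zero[of scale scale "\<lambda>x. mult x y"] by simp

lemma bilinear_prod_zero_right: "bilinear_prod scale mult \<Longrightarrow> mult x 0 = 0"
  unfolding bilinear_prod_def using linear_map_zero[of scale scale "mult x"] by simp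

lemma rota_baxter0_add: "rota_baxter0 scale mult R \<Longrightarrow> R (x + y) = R x + R y"
  unfolding rota_baxter0_def linear_iff by blast

lemma rota_baxter0_identity:
  "rota_baxter0 scale mult R \<Longrightarrow> mult (R x) (R y) = R (mult (R x) y + mult x (R y))"
  unfolding rota_baxter0_def by blast

lemma rota_baxter0_kernel_mult_image_left:
  assumes "bilinear_prod scale mult" "rota_baxter0 scale mult R" "R e = 0"
  shows "R (mult e (R x)) = 0"
  using rota_baxter0_identity[OF assms(2), of e x] assms(3) bilinear_prod_zero_left[OF assms(1)]
  by simp

lemma rota_baxter0_kernel_mult_image_right:
  assumes "bilinear_prod scale mult" "rota_baxter0 scale mult R" "R e = 0"
  shows "R (mult (R x) e) = 0"
  using rota_baxter0_identity[OF assms(2), of x e] assms(3) bilinear_prod_zero_right[OF assms(1)]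
  by simp

lemma rota_baxter0_idempotent_in_kernel_and_image_square:
  assumes "bilinear_prod scale mult" "rota_baxter0 scale mult R"
    and "mult e e = e" "R e = 0" "e = R (R w)"
  shows "e = 0"
proof -
  have "e = mult (R (R w)) (R (R w))"
    using assms(3,5) by simp
  also have "\<dots> = R (mult e (R w) + mult (R w) e)"
    using rota_baxter0_identity[OF assms(2), of "R w" "R w"] by (simp only: assms(5)[symmetric])
  also have "\<dots> = R (mult e (R w)) + R (mult (R w) e)"
    using rota_baxter0_add[OF assms(2)] .
  also have "\<dots> = 0"
    using rota_baxter0_kernel_mult_image_left[OF assms(1,2,4)]
      rota_baxter0_kernel_mult_image_right[OF assms(1,2,4)] by simp
  finally show ?thesis .
qed

lemma range_funpow_subset_range_square:
  assumes "k \<ge> 2"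
  shows "range (f ^^ k) \<subseteq> range (\<lambda>w. f (f w))"
proof -
  obtain j where "k = Suc (Suc j)"
    using assms by (metis add_2_eq_Suc le_Suc_ex)
  then have "(f ^^ k) a = f (f ((f ^^ j) a))" for a
    by simp
  then show ?thesis by blast
qed

theorem lemma13:
  fixes scale :: "'k::field \<Rightarrow> 'a::ab_group_add \<Rightarrow> 'a"
    and mult :: "'a \<Rightarrow> 'a \<Rightarrow> 'a"
    and R :: "'a \<Rightarrow> 'a" and e :: 'a and k :: nat
  assumes "is_algebra scale mult"
    and "rota_baxter0 scale mult R"
    and "e \<noteq> 0" and "mult e e = e"
    and "k \<ge> 2"
  shows "\<not> (e \<in> range (R ^^ k) \<and> R e = 0)"
proof (intro notI, elim conjE)
  assume e_image: "e \<in> range (R ^^ k)" and e_kernel: "R e = 0"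
  have "e \<in> range (\<lambda>w. R (R w))"
    using range_funpow_subset_range_square[OF assms(5), of R] e_image by (rule subsetD)
  then obtain w where w: "e = R (R w)"
    by (rule rangeE)
  have "bilinear_prod scale mult"
    using assms(1) by (simp add: is_algebra_def)
  then have "e = 0"
    using assms(2,4) e_kernel w by (rule rota_baxter0_idempotent_in_kernel_and_image_square)
  with assms(3) show False ..
qed

end
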